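(* Let $A$ be a finite nonempty set. The monoid $T=\{\mathrm{id}_A\}\cup C$ is u-closed.
   Context: $C$ is the set of all constant unary maps on $A$. A translation of an $n$-ary operation $f$ on $A$ is $x\mapsto f(a_1,\dots,a_{i-1},x,a_{i+1},\dots,a_n)$ with fixed $a_j\in A$; $\mathrm{trl}(f)$ is the set of translations ($\{f\}$ for unary $f$); $N^*:=\{f\mid\mathrm{trl}(f)\subseteq N\}$ for $N\subseteq A^A$. The u-closure $\overline M$ of $M\subseteq A^A$ is the intersection of all monoids $N$ with $M\subseteq N\le A^A$ such that $N^*$ is a clone; $M$ is u-closed if $\overline M=M$. *)

theory Defs
  imports "HOL-Library.FuncSet"
begin

definition unary_maps :: "'a set \<Rightarrow> ('a \<Rightarrow> 'a) set" where
  "unary_maps A = A \<rightarrow>\<^sub>E A"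

definition tuples :: "'a set \<Rightarrow> nat \<Rightarrow> 'a list set" where
  "tuples A n = {xs. length xs = n \<and> set xs \<subseteq> A}"

definition ops :: "'a set \<Rightarrow> (nat \<times> ('a list \<Rightarrow> 'a)) set" where
  "ops A = {(n, f). n \<ge> 1 \<and> f \<in> tuples A n \<rightarrow>\<^sub>E A}"

definition monoid_on :: "'a set \<Rightarrow> ('a \<Rightarrow> 'a) set \<Rightarrow> bool" where
  "monoid_on A N \<longleftrightarrow> N \<subseteq> unary_maps A \<and> restrict id A \<in> N \<and>
     (\<forall>f\<in>N. \<forall>g\<in>N. restrict (f \<circ> g) A \<in> N)"

definition projection :: "'a set \<Rightarrow> nat \<Rightarrow> nat \<Rightarrow> 'a list \<Rightarrow> 'a" where
  "projection A n i = restrict (\<lambda>xs. xs ! i) (tuples A n)"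

definition clone :: "'a set \<Rightarrow> (nat \<times> ('a list \<Rightarrow> 'a)) set \<Rightarrow> bool" where
  "clone A F \<longleftrightarrow> F \<subseteq> ops A \<and>
     (\<forall>n i. 1 \<le> n \<and> i < n \<longrightarrow> (n, projection A n i) \<in> F) \<and>
     (\<forall>n f m gs. (n, f) \<in> F \<and> length gs = n \<and> (\<forall>g\<in>set gs. (m, g) \<in> F) \<longrightarrow>
        (m, restrict (\<lambda>xs. f (map (\<lambda>g. g xs) gs)) (tuples A m)) \<in> F)"

text \<open>Translations: x \<mapsto> f(a_1,\<dots>,a_{i-1},x,a_{i+1},\<dots>,a_n) with all a_j \<in> A.
  For unary f this gives exactly {f}.\<close>
definition trl :: "'a set \<Rightarrow> nat \<times> ('a list \<Rightarrow> 'a) \<Rightarrow> ('a \<Rightarrow> 'a) set" where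
  "trl A nf = (case nf of (n, f) \<Rightarrow>
     {restrict (\<lambda>x. f (as[i := x])) A | as i. as \<in> tuples A n \<and> i < n})"

definition star :: "'a set \<Rightarrow> ('a \<Rightarrow> 'a) set \<Rightarrow> (nat \<times> ('a list \<Rightarrow> 'a)) set" where
  "star A N = {nf \<in> ops A. trl A nf \<subseteq> N}"

definition u_closure :: "'a set \<Rightarrow> ('a \<Rightarrow> 'a) set \<Rightarrow> ('a \<Rightarrow> 'a) set" where
  "u_closure A M = \<Inter>{N. M \<subseteq> N \<and> monoid_on A N \<and> clone A (star A N)}"

definition u_closed :: "'a set \<Rightarrow> ('a \<Rightarrow> 'a) set \<Rightarrow> bool" where
  "u_closed A M \<longleftrightarrow> u_closure A M = M"

definition constants :: "'a set \<Rightarrow> ('a \<Rightarrow> 'a) set" where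
  "constants A = {restrict (\<lambda>_. c) A | c. c \<in> A}"

end

theory Submission
  imports Defs
begin

text \<open>
  Membership of an operation in T* means that each of its translations is the
  identity or a constant. For a composition
  h = f(g_1, ..., g_n), freezing all arguments of h but one turns every
  g_i into the identity or a constant, so the translation of h is
  f with the variable substituted at a set S of positions and constants
  elsewhere. A binary map whose rows and columns are all identities or constants has an
  identity or constant diagonal; by induction on S the translation of h
  is therefore again the identity or a constant. So T* is a clone, and
  T is one of the monoids intersected in its own u-closure.
\<close>

abbreviation id_constants :: "'a set \<Rightarrow> ('a \<Rightarrow> 'a) set" where
  "id_constants A \<equiv> insert (restrict id A) (constants A)"

definition id_or_const_on :: "'a set \<Rightarrow> ('a \<Rightarrow> 'a) \<Rightarrow> bool" where
  "id_or_const_on A u \<longleftrightarrow> (\<forall>x\<in>A. u x = x) \<or> (\<exists>c\<in>A. \<forall>x\<in>A. u x = c)"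

lemma id_or_const_on_cong:
  "id_or_const_on A u \<Longrightarrow> (\<And>x. x \<in> A \<Longrightarrow> v x = u x) \<Longrightarrow> id_or_const_on A v"
  unfolding id_or_const_on_def by auto

lemma id_or_const_on_comp:
  "id_or_const_on A u \<Longrightarrow> id_or_const_on A v \<Longrightarrow> id_or_const_on A (u \<circ> v)"
  unfolding id_or_const_on_def by auto

lemma restrict_in_id_constants_iff:
  "restrict u A \<in> id_constants A \<longleftrightarrow> id_or_const_on A u"
proof
  assume "restrict u A \<in> id_constants A"
  then consider "restrict u A = restrict id A"
    | c where "c \<in> A" "restrict u A = restrict (\<lambda>_. c) A"
    unfolding constants_def by blast
  then show "id_or_const_on A u"
    unfolding id_or_const_on_def by cases (metis id_apply restrict_apply')+
next
  assume "id_or_const_on A u"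
  then consider "\<forall>x\<in>A. u x = x" | c where "c \<in> A" "\<forall>x\<in>A. u x = c"
    unfolding id_or_const_on_def by blast
  then show "restrict u A \<in> id_constants A"
  proof cases
    case 1
    then have "restrict u A = restrict id A" by (intro restrict_ext) simp
    then show ?thesis by simp
  next
    case 2
    then have "restrict u A = restrict (\<lambda>_. c) A" by (intro restrict_ext) simp
    then show ?thesis using 2 unfolding constants_def by blast
  qed
qed

lemma id_constants_in_id_or_const_on:
  "u \<in> id_constants A \<Longrightarrow> id_or_const_on A u"
  unfolding constants_def id_or_const_on_def by auto

text \<open>
  If some row is the identity, no column is constant, so all columns are identities;
  symmetrically for columns. Otherwise all rows and all columns are constant, and
  \<psi> is constant.
\<close>
lemma id_or_const_on_diagonal:
  assumes "A \<noteq> {}"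
    and rows: "\<And>x. x \<in> A \<Longrightarrow> id_or_const_on A (\<lambda>y. \<psi> x y)"
    and cols: "\<And>y. y \<in> A \<Longrightarrow> id_or_const_on A (\<lambda>x. \<psi> x y)"
  shows "id_or_const_on A (\<lambda>x. \<psi> x x)"
proof (cases "\<exists>a\<in>A. \<forall>y\<in>A. \<psi> a y = y")
  case True
  then obtain a where "a \<in> A" "\<forall>y\<in>A. \<psi> a y = y" by blast
  then have "\<psi> b b = b" if "b \<in> A" for b
    using cols[OF that] that unfolding id_or_const_on_def by metis
  then show ?thesis unfolding id_or_const_on_def by blast
next
  case no_id_row: False
  show ?thesis
  proof (cases "\<exists>b\<in>A. \<forall>x\<in>A. \<psi> x b = x")
    case True
    then obtain b where "b \<in> A" "\<forall>x\<in>A. \<psi> x b = x" by blast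
    then have "\<psi> a a = a" if "a \<in> A" for a
      using rows[OF that] that unfolding id_or_const_on_def by metis
    then show ?thesis unfolding id_or_const_on_def by blast
  next
    case no_id_col: False
    obtain a where a: "a \<in> A" using \<open>A \<noteq> {}\<close> by blast
    with rows[OF a] no_id_row obtain c where c: "c \<in> A" "\<forall>y\<in>A. \<psi> a y = c"
      unfolding id_or_const_on_def by blast
    have "\<psi> x x = c" if x: "x \<in> A" for x
    proof -
      from cols[OF x] no_id_col x obtain k where "\<forall>z\<in>A. \<psi> z x = k"
        unfolding id_or_const_on_def by blast
      then show ?thesis using c a x by metis
    qed
    then show ?thesis unfolding id_or_const_on_def using c by blast
  qed
qed

definition fill_positions :: "'a list \<Rightarrow> nat set \<Rightarrow> 'a \<Rightarrow> 'a list" where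
  "fill_positions as S x = map (\<lambda>i. if i \<in> S then x else as ! i) [0..<length as]"

lemma fill_positions_empty [simp]: "fill_positions as {} x = as"
  unfolding fill_positions_def by (simp add: map_nth)

lemma length_fill_positions [simp]: "length (fill_positions as S x) = length as"
  unfolding fill_positions_def by simp

lemma nth_fill_positions:
  "i < length as \<Longrightarrow> fill_positions as S x ! i = (if i \<in> S then x else as ! i)"
  unfolding fill_positions_def by simp

lemma fill_positions_insert:
  "k < length as \<Longrightarrow> fill_positions as (insert k S) x = fill_positions (as[k := x]) S x"
  by (rule nth_equalityI) (auto simp: nth_fill_positions nth_list_update)

lemma fill_positions_list_update:
  "k \<notin> S \<Longrightarrow> fill_positions (as[k := y]) S x = (fill_positions as S x)[k := y]"
proof (rule nth_equalityI)
  fix i assume "k \<notin> S" "i < length (fill_positions (as[k := y]) S x)"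
  then show "fill_positions (as[k := y]) S x ! i = (fill_positions as S x)[k := y] ! i"
    by (cases "i = k") (auto simp: nth_fill_positions)
qed simp

lemma list_update_in_tuples: "xs \<in> tuples A n \<Longrightarrow> x \<in> A \<Longrightarrow> xs[i := x] \<in> tuples A n"
  unfolding tuples_def by (auto dest: set_update_subset_insert[THEN subsetD])

lemma fill_positions_in_tuples:
  "as \<in> tuples A n \<Longrightarrow> x \<in> A \<Longrightarrow> fill_positions as S x \<in> tuples A n"
  unfolding tuples_def fill_positions_def by auto

lemma id_or_const_on_fill_positions:
  assumes "A \<noteq> {}" and f: "f \<in> tuples A n \<rightarrow>\<^sub>E A"
    and f_translations: "\<And>as i. as \<in> tuples A n \<Longrightarrow> i < n \<Longrightarrow>
      id_or_const_on A (\<lambda>x. f (as[i := x]))"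
    and "finite S" "S \<subseteq> {..<n}" "as \<in> tuples A n"
  shows "id_or_const_on A (\<lambda>x. f (fill_positions as S x))"
  using \<open>finite S\<close> \<open>S \<subseteq> {..<n}\<close> \<open>as \<in> tuples A n\<close>
proof (induction S arbitrary: as)
  case empty
  then have "f as \<in> A" using f by auto
  then show ?case unfolding id_or_const_on_def by auto
next
  case (insert k S)
  have k: "k < n" "length as = n" using insert.prems unfolding tuples_def by auto
  have "id_or_const_on A (\<lambda>x. f (fill_positions (as[k := x]) S x))"
  proof (rule id_or_const_on_diagonal[OF \<open>A \<noteq> {}\<close>,
      where \<psi> = "\<lambda>x y. f (fill_positions (as[k := y]) S x)"])
    fix x assume "x \<in> A"
    then have "id_or_const_on A (\<lambda>y. f ((fill_positions as S x)[k := y]))"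
      using f_translations[OF fill_positions_in_tuples[OF insert.prems(2)] \<open>k < n\<close>] by blast
    then show "id_or_const_on A (\<lambda>y. f (fill_positions (as[k := y]) S x))"
      unfolding fill_positions_list_update[OF \<open>k \<notin> S\<close>] .
  next
    fix y assume "y \<in> A"
    then show "id_or_const_on A (\<lambda>x. f (fill_positions (as[k := y]) S x))"
      using insert.prems list_update_in_tuples by (intro insert.IH) auto
  qed
  then show ?case by (simp only: fill_positions_insert k)
qed

lemma id_or_const_on_composition_translation:
  assumes "A \<noteq> {}" and f: "f \<in> tuples A n \<rightarrow>\<^sub>E A"
    and f_translations: "\<And>as i. as \<in> tuples A n \<Longrightarrow> i < n \<Longrightarrow>
      id_or_const_on A (\<lambda>x. f (as[i := x]))"
    and "length gs = n" and gs: "\<And>g. g \<in> set gs \<Longrightarrow> g \<in> tuples A m \<rightarrow>\<^sub>E A"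
    and gs_translations: "\<And>g as i. g \<in> set gs \<Longrightarrow> as \<in> tuples A m \<Longrightarrow> i < m \<Longrightarrow>
      id_or_const_on A (\<lambda>x. g (as[i := x]))"
    and xs: "xs \<in> tuples A m" and "j < m"
  shows "id_or_const_on A (\<lambda>x. f (map (\<lambda>g. g (xs[j := x])) gs))"
proof -
  obtain a where a: "a \<in> A" using \<open>A \<noteq> {}\<close> by blast
  \<comment> \<open>Where the translation of gs ! i is not the identity it is constant, so its value
    can be read off at the arbitrary point a.\<close>
  define S where "S = {i. i < n \<and> (\<forall>x\<in>A. (gs ! i) (xs[j := x]) = x)}"
  define as where "as = map (\<lambda>g. g (xs[j := a])) gs"
  have "as \<in> tuples A n"
    using gs[THEN PiE_mem] list_update_in_tuples[OF xs a] \<open>length gs = n\<close>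
    unfolding as_def tuples_def by auto
  moreover have "finite S" "S \<subseteq> {..<n}" unfolding S_def by auto
  ultimately have "id_or_const_on A (\<lambda>x. f (fill_positions as S x))"
    by (intro id_or_const_on_fill_positions[OF \<open>A \<noteq> {}\<close> f f_translations])
  moreover have "map (\<lambda>g. g (xs[j := x])) gs = fill_positions as S x" if x: "x \<in> A" for x
  proof (rule nth_equalityI)
    fix i assume "i < length (map (\<lambda>g. g (xs[j := x])) gs)"
    then have i: "i < length gs" by simp
    then have "id_or_const_on A (\<lambda>x. (gs ! i) (xs[j := x]))"
      using gs_translations xs \<open>j < m\<close> by simp
    then show "map (\<lambda>g. g (xs[j := x])) gs ! i = fill_positions as S x ! i"
      using i x a \<open>length gs = n\<close>
      unfolding S_def as_def id_or_const_on_def by (auto simp: nth_fill_positions)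
  qed (simp add: as_def)
  ultimately show ?thesis by (auto elim: id_or_const_on_cong)
qed

lemma mem_star_iff:
  "(n, f) \<in> star A N \<longleftrightarrow>
    (n, f) \<in> ops A \<and>
    (\<forall>as i. as \<in> tuples A n \<and> i < n \<longrightarrow> restrict (\<lambda>x. f (as[i := x])) A \<in> N)"
  unfolding star_def trl_def by blast

lemma mem_star_id_constants_iff:
  "(n, f) \<in> star A (id_constants A) \<longleftrightarrow>
    (n, f) \<in> ops A \<and>
    (\<forall>as i. as \<in> tuples A n \<and> i < n \<longrightarrow> id_or_const_on A (\<lambda>x. f (as[i := x])))"
  by (simp only: mem_star_iff restrict_in_id_constants_iff)

lemma monoid_on_id_constants: "monoid_on A (id_constants A)"
  unfolding monoid_on_def
proof (intro conjI ballI)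
  show "id_constants A \<subseteq> unary_maps A"
    unfolding unary_maps_def constants_def by auto
  fix f g assume "f \<in> id_constants A" "g \<in> id_constants A"
  then show "restrict (f \<circ> g) A \<in> id_constants A"
    by (simp only: restrict_in_id_constants_iff id_or_const_on_comp id_constants_in_id_or_const_on)
qed simp

lemma projection_in_star_id_constants:
  assumes "i < n"
  shows "(n, projection A n i) \<in> star A (id_constants A)"
proof -
  have "(n, projection A n i) \<in> ops A"
    using assms unfolding ops_def projection_def tuples_def by auto
  moreover have "id_or_const_on A (\<lambda>x. projection A n i (as[k := x]))"
    if as: "as \<in> tuples A n" and "k < n" for as k
  proof -
    have "as ! i \<in> A" using as \<open>i < n\<close> unfolding tuples_def by auto
    then have "id_or_const_on A (\<lambda>x. if k = i then x else as ! i)"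
      unfolding id_or_const_on_def by auto
    moreover have "projection A n i (as[k := x]) = (if k = i then x else as ! i)" if "x \<in> A" for x
      using list_update_in_tuples[OF as that, of k] as \<open>k < n\<close> \<open>i < n\<close>
      unfolding projection_def tuples_def by (auto simp: nth_list_update)
    ultimately show ?thesis by (rule id_or_const_on_cong)
  qed
  ultimately show ?thesis by (simp add: mem_star_id_constants_iff)
qed

lemma composition_in_star_id_constants:
  assumes "A \<noteq> {}" and f: "(n, f) \<in> star A (id_constants A)" and "length gs = n"
    and gs: "\<And>g. g \<in> set gs \<Longrightarrow> (m, g) \<in> star A (id_constants A)"
  shows "(m, restrict (\<lambda>xs. f (map (\<lambda>g. g xs) gs)) (tuples A m)) \<in> star A (id_constants A)"
proof -
  let ?h = "restrict (\<lambda>xs. f (map (\<lambda>g. g xs) gs)) (tuples A m)"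
  have "n \<ge> 1" and f_ext: "f \<in> tuples A n \<rightarrow>\<^sub>E A"
    and f_translations: "\<And>as i. as \<in> tuples A n \<Longrightarrow> i < n \<Longrightarrow>
      id_or_const_on A (\<lambda>x. f (as[i := x]))"
    using f by (auto simp: mem_star_id_constants_iff ops_def)
  have gs_ext: "\<And>g. g \<in> set gs \<Longrightarrow> g \<in> tuples A m \<rightarrow>\<^sub>E A"
    and gs_translations: "\<And>g as i. g \<in> set gs \<Longrightarrow> as \<in> tuples A m \<Longrightarrow> i < m \<Longrightarrow>
      id_or_const_on A (\<lambda>x. g (as[i := x]))"
    using gs by (auto simp: mem_star_id_constants_iff ops_def)
  have "hd gs \<in> set gs" using \<open>length gs = n\<close> \<open>n \<ge> 1\<close> by (auto intro: hd_in_set)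
  then have "m \<ge> 1" using gs by (auto simp: mem_star_id_constants_iff ops_def)
  have "map (\<lambda>g. g xs) gs \<in> tuples A n" if "xs \<in> tuples A m" for xs
    using gs_ext that \<open>length gs = n\<close> unfolding tuples_def by auto
  with \<open>m \<ge> 1\<close> f_ext have "(m, ?h) \<in> ops A"
    unfolding ops_def by auto
  moreover have "id_or_const_on A (\<lambda>x. ?h (xs[j := x]))"
    if xs: "xs \<in> tuples A m" and "j < m" for xs j
    by (rule id_or_const_on_cong[OF id_or_const_on_composition_translation[OF \<open>A \<noteq> {}\<close>
          f_ext f_translations \<open>length gs = n\<close> gs_ext gs_translations xs \<open>j < m\<close>]])
      (use list_update_in_tuples[OF xs] in auto)
  ultimately show ?thesis by (simp add: mem_star_id_constants_iff)
qed

lemma clone_star_id_constants: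
  assumes "A \<noteq> {}"
  shows "clone A (star A (id_constants A))"
  unfolding clone_def
proof (intro conjI allI impI)
  show "star A (id_constants A) \<subseteq> ops A" by (auto simp: star_def)
next
  fix n i :: nat assume "1 \<le> n \<and> i < n"
  then show "(n, projection A n i) \<in> star A (id_constants A)"
    by (simp add: projection_in_star_id_constants)
next
  fix n f m gs
  assume "(n, f) \<in> star A (id_constants A) \<and> length gs = n \<and>
    (\<forall>g\<in>set gs. (m, g) \<in> star A (id_constants A))"
  then show "(m, restrict (\<lambda>xs. f (map (\<lambda>g. g xs) gs)) (tuples A m)) \<in> star A (id_constants A)"
    by (intro composition_in_star_id_constants[OF assms]) auto
qed

lemma u_closedI:
  assumes "monoid_on A M" and "clone A (star A M)"
  shows "u_closed A M"
  using assms unfolding u_closed_def u_closure_def by blast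

theorem proposition5p1:
  fixes A :: "'a set"
  assumes "finite A" and "A \<noteq> {}"
  shows "u_closed A (insert (restrict id A) (constants A))"
  using u_closedI monoid_on_id_constants clone_star_id_constants[OF assms(2)] .

end
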